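(* For $n\ge 1$ let $Y_n$ be the random variable with \[ \mathbb{P}(Y_n=m)=\frac{[t^nx^m]H(t,x)}{[t^n]H(t,1)}. \] Then $Y_n/(2n)$ converges in law, with convergence of all moments, to a random variable $Y$ with the $\mathrm{Beta}(1,2)$ distribution, i.e. with density $f_Y(y)=2(1-y)$ for $y\in[0,1]$ and $0$ otherwise; its moments are $\mathbb{E}(Y^r)=\frac{2}{(r+1)(r+2)}$.
   Context: A bicolored Dyck path is a finite sequence of steps from $\{U_1,U_2,D\}$ ($U_1,U_2$ raise the height by $1$, $D$ lowers it by $1$) starting and ending at height $0$ and never going below height $0$; its length is its number of steps. Let $h_{n,m}$ be the number of pairs $(P,m)$ where $P$ is a bicolored Dyck path of length $2n$ with exactly one $U_2$ step, this being the $p$-th step of $P$, and $1\le m\le p$. Set $H(t,x)=\sum_{n,m}h_{n,m}t^nx^m$. (Equivalently, $Y_n$ is the value in the unique bottom-row cell of a uniformly random tableau with walls and holes of type $(n,n-1,1)$.) *)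

theory Defs
  imports "HOL-Probability.Probability"
begin

text \<open>Steps of a bicolored Dyck path.\<close>
datatype bstep = U1 | U2 | D

fun stepval :: "bstep \<Rightarrow> int" where
  "stepval U1 = 1" | "stepval U2 = 1" | "stepval D = -1"

definition height :: "bstep list \<Rightarrow> int" where
  "height P = (\<Sum>s\<leftarrow>P. stepval s)"

definition bic_dyck :: "bstep list \<Rightarrow> bool" where
  "bic_dyck P \<longleftrightarrow> height P = 0 \<and> (\<forall>k \<le> length P. height (take k P) \<ge> 0)"

text \<open>h n m = number of pairs (P,m) where P is a bicolored Dyck path of length 2n with exactly
  one U2 step, this being the p-th step (1-indexed), and 1 \<le> m \<le> p.
  (These are the coefficients [t^n x^m] H(t,x).)\<close>
definition hcoef :: "nat \<Rightarrow> nat \<Rightarrow> nat" where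
  "hcoef n m = card {P. length P = 2 * n \<and> bic_dyck P \<and> length (filter (\<lambda>s. s = U2) P) = 1 \<and>
      (\<exists>p. 1 \<le> p \<and> p \<le> length P \<and> P ! (p - 1) = U2 \<and> 1 \<le> m \<and> m \<le> p)}"

text \<open>[t^n] H(t,1) = \<Sum>_m h n m.\<close>
definition htot :: "nat \<Rightarrow> nat" where
  "htot n = (\<Sum>m\<le>2 * n. hcoef n m)"

definition Ylaw :: "nat \<Rightarrow> nat measure" where
  "Ylaw n = density (count_space UNIV) (\<lambda>m. ennreal (real (hcoef n m) / real (htot n)))"

definition Yscaled_law :: "nat \<Rightarrow> real measure" where
  "Yscaled_law n = distr (Ylaw n) borel (\<lambda>m. real m / (2 * real n))"

definition beta12 :: "real measure" where
  "beta12 = density lborel (\<lambda>y. ennreal (indicator {0..1} y * (2 * (1 - y))))"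

end

(*
  Replacing the unique U2 step by U1 shows that h n m = (sum over i >= m - 1 of A n i), where
  A n i counts the Dyck paths of length 2n whose step i is an up step.  Mirroring paths gives
  A n i + A n (2n - 1 - i) = C n (the Catalan number), and swapping two adjacent steps shows
  that A n i decreases in i, by at most the number of paths at height 0 after i steps, which is
  at most C j * C (n - j) for i = 2j.  Central binomial estimates bound the total of these
  defects by O(C n * sqrt n), so 2 h n m = C n * (2n + 1 - m) + O(C n * sqrt n).  Summing over
  m <= 2nx gives P(Y n / (2n) <= x) --> 2x - x^2, the distribution function of Beta(1, 2);
  as all these laws live on [0, 1], the moments converge as well.
*)
theory Submission
  imports Defs "HOL-Real_Asymp.Real_Asymp"
begin

section \<open>Dyck paths and Catalan numbers\<close>

lemma UNIV_bstep: "(UNIV :: bstep set) = {U1, U2, D}"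
  using bstep.exhaust by auto

lemma finite_paths_length_eq: "finite {P :: bstep list. length P = k}"
proof -
  have "finite (UNIV :: bstep set)" by (simp add: UNIV_bstep)
  from finite_lists_length_eq[OF this, of k] show ?thesis by simp
qed

lemma height_Nil [simp]: "height [] = 0"
  and height_Cons [simp]: "height (s # P) = stepval s + height P"
  and height_append [simp]: "height (P @ Q) = height P + height Q"
  by (simp_all add: height_def)

lemma even_height_plus_length: "even (height P + int (length P))"
proof (induction P)
  case (Cons s P) then show ?case by (cases s) auto
qed simp

lemma height_le_length: "height P \<le> int (length P)"
proof (induction P)
  case (Cons s P) then show ?case by (cases s) auto
qed simp

definition never_negative :: "bstep list \<Rightarrow> bool" where
  "never_negative P \<longleftrightarrow> (\<forall>k \<le> length P. height (take k P) \<ge> 0)"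

lemma never_negative_Nil [simp]: "never_negative []"
  by (simp add: never_negative_def)

lemma never_negative_height_take: "never_negative P \<Longrightarrow> height (take k P) \<ge> 0"
  by (cases "k \<le> length P") (auto simp: never_negative_def dest: spec[of _ "length P"])

lemma never_negative_height: "never_negative P \<Longrightarrow> height P \<ge> 0"
  using never_negative_height_take[of P "length P"] by simp

lemma never_negative_snoc:
  "never_negative (P @ [s]) \<longleftrightarrow> never_negative P \<and> height P + stepval s \<ge> 0"
  unfolding never_negative_def by (auto simp: le_Suc_eq)

definition ballot_paths :: "nat \<Rightarrow> nat \<Rightarrow> bstep list set" where
  "ballot_paths a b =
     {P. length P = a + b \<and> height P = int a - int b \<and> never_negative P \<and> U2 \<notin> set P}"

lemma finite_ballot_paths [simp]: "finite (ballot_paths a b)"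
  by (rule finite_subset[OF _ finite_paths_length_eq[of "a + b"]]) (auto simp: ballot_paths_def)

lemma ballot_paths_empty: "a < b \<Longrightarrow> ballot_paths a b = {}"
  by (auto simp: ballot_paths_def dest: never_negative_height)

lemma ballot_paths_0_0: "ballot_paths 0 0 = {[]}"
  by (auto simp: ballot_paths_def)

lemma ballot_paths_by_last_step:
  assumes "0 < a + b"
  shows "ballot_paths a b =
           (\<lambda>Q. Q @ [U1]) ` (if 0 < a then ballot_paths (a - 1) b else {}) \<union>
           (\<lambda>Q. Q @ [D]) ` (if 0 < b \<and> b \<le> a then ballot_paths a (b - 1) else {})"
proof (intro equalityI subsetI)
  fix P assume P: "P \<in> ballot_paths a b"
  then have "P \<noteq> []" using assms by (auto simp: ballot_paths_def)
  then obtain Q s where Ps: "P = Q @ [s]" by (metis rev_exhaust)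
  with P have Q: "never_negative Q" "U2 \<notin> set Q" "height Q + stepval s \<ge> 0"
    by (auto simp: ballot_paths_def never_negative_snoc)
  consider "s = U1" | "s = D" using P Ps by (cases s) (auto simp: ballot_paths_def)
  then show "P \<in> (\<lambda>Q. Q @ [U1]) ` (if 0 < a then ballot_paths (a - 1) b else {}) \<union>
               (\<lambda>Q. Q @ [D]) ` (if 0 < b \<and> b \<le> a then ballot_paths a (b - 1) else {})"
  proof cases
    case 1
    with P Ps have "height Q = int a - int b - 1" by (simp add: ballot_paths_def)
    with Q have "0 < a" using never_negative_height[of Q] by linarith
    with P Ps Q 1 show ?thesis by (auto simp: ballot_paths_def)
  next
    case 2
    with P Ps have "height Q = int a - int b + 1" by (simp add: ballot_paths_def)
    with P Ps 2 have "0 < b" "b \<le> a"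
      using height_le_length[of Q] never_negative_height[of P] by (auto simp: ballot_paths_def)
    with P Ps Q 2 show ?thesis by (auto simp: ballot_paths_def)
  qed
next
  fix P
  assume "P \<in> (\<lambda>Q. Q @ [U1]) ` (if 0 < a then ballot_paths (a - 1) b else {}) \<union>
            (\<lambda>Q. Q @ [D]) ` (if 0 < b \<and> b \<le> a then ballot_paths a (b - 1) else {})"
  then show "P \<in> ballot_paths a b"
    by (auto simp: ballot_paths_def never_negative_snoc split: if_splits dest: never_negative_height)
qed

lemma card_ballot_paths_rec:
  assumes "0 < a + b"
  shows "card (ballot_paths a b) =
           (if 0 < a then card (ballot_paths (a - 1) b) else 0) +
           (if 0 < b \<and> b \<le> a then card (ballot_paths a (b - 1)) else 0)"
  unfolding ballot_paths_by_last_step[OF assms]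
  by (subst card_Un_disjoint) (auto simp: card_image inj_on_def)

definition ballot_number :: "nat \<Rightarrow> nat \<Rightarrow> real" where
  "ballot_number a b = (real a + 1 - real b) / (real a + 1) * real ((a + b) choose b)"

lemma ballot_number_0 [simp]: "ballot_number a 0 = 1"
  by (simp add: ballot_number_def)

lemma ballot_number_Suc_diag: "ballot_number a (Suc a) = 0"
  by (simp add: ballot_number_def)

lemma ballot_number_rec:
  "ballot_number (Suc a) (Suc b) = ballot_number a (Suc b) + ballot_number (Suc a) b"
proof -
  define N where "N = a + b + 1"
  define v where "v = real ((a + b) choose b)"
  have N: "Suc a + Suc b = Suc N" "a + Suc b = N" "Suc a + b = N" "real N = real a + real b + 1"
    by (simp_all add: N_def)
  have c1: "real (N choose Suc b) = real N * v / real (Suc b)"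
    using binomial_absorption[of b N] by (simp add: N_def v_def field_simps flip: of_nat_mult)
  have c0: "real (N choose b) = real N * v / real (Suc a)"
    using binomial_absorb_comp[of N b] by (simp add: N_def v_def field_simps flip: of_nat_mult)
  have c2: "real (Suc N choose Suc b) = real (Suc N) * real (N choose b) / real (Suc b)"
    using Suc_times_binomial_eq[of N b] by (simp add: field_simps flip: of_nat_mult)
  have "(x + 1 - y) / (x + 2) * ((x + y + 2) * ((x + y + 1) * v / (x + 1)) / (y + 1)) =
        (x - y) / (x + 1) * ((x + y + 1) * v / (y + 1)) + (x + 2 - y) / (x + 2) * ((x + y + 1) * v / (x + 1))"
    if "x \<ge> 0" "y \<ge> 0" for x y :: real
  proof -
    have "x + 1 \<noteq> 0" "x + 2 \<noteq> 0" "y + 1 \<noteq> 0" using that by auto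
    then show ?thesis by (simp add: divide_simps) (simp add: algebra_simps)
  qed
  from this[of "real a" "real b"] show ?thesis
    unfolding ballot_number_def N(1-3) c2 c0 c1 by (simp add: N(4) ac_simps add_diff_eq)
qed

lemma card_ballot_paths:
  "real (card (ballot_paths a b)) = (if b \<le> a then ballot_number a b else 0)"
proof (induction "a + b" arbitrary: a b)
  case 0
  then show ?case by (simp add: ballot_paths_0_0)
next
  case (Suc s)
  consider "a < b" | "b = 0" "0 < a" | a' b' where "a = Suc a'" "b = Suc b'" "b \<le> a"
    using Suc.hyps(2) by (metis add_is_0 gr0I not0_implies_Suc not_le)
  then show ?case
  proof cases
    case 1
    then show ?thesis by (simp add: ballot_paths_empty)
  next
    case 2
    then show ?thesis
      using card_ballot_paths_rec[of a b] Suc(1)[of "a - 1" 0] Suc(2) by simp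
  next
    case 3
    have "real (card (ballot_paths a' (Suc b'))) = ballot_number a' (Suc b')"
      using Suc(1)[of a' "Suc b'"] Suc(2) 3 ballot_number_Suc_diag[of a'] by (cases "b' = a'") auto
    moreover have "real (card (ballot_paths (Suc a') b')) = ballot_number (Suc a') b'"
      using Suc(1)[of "Suc a'" b'] Suc(2) 3 by simp
    ultimately show ?thesis
      using card_ballot_paths_rec[of a b] 3 by (simp add: ballot_number_rec)
  qed
qed

lemma bic_dyck_iff: "bic_dyck P \<longleftrightarrow> height P = 0 \<and> never_negative P"
  by (simp add: bic_dyck_def never_negative_def)

definition dyck_paths :: "nat \<Rightarrow> bstep list set" where
  "dyck_paths k = {P. length P = k \<and> bic_dyck P \<and> U2 \<notin> set P}"

lemma finite_dyck_paths [simp]: "finite (dyck_paths k)"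
  by (rule finite_subset[OF _ finite_paths_length_eq[of k]]) (auto simp: dyck_paths_def)

lemma dyck_paths_odd: "odd k \<Longrightarrow> dyck_paths k = {}"
  using even_height_plus_length by (fastforce simp: dyck_paths_def bic_dyck_def)

lemma dyck_paths_eq_ballot_paths: "dyck_paths (2 * n) = ballot_paths n n"
  by (auto simp: dyck_paths_def ballot_paths_def bic_dyck_iff)

definition catalan :: "nat \<Rightarrow> real" where
  "catalan n = real ((2 * n) choose n) / (real n + 1)"

lemma catalan_pos: "catalan n > 0"
  by (simp add: catalan_def)

lemma card_dyck_paths: "real (card (dyck_paths (2 * n))) = catalan n"
  unfolding dyck_paths_eq_ballot_paths card_ballot_paths
  by (simp add: ballot_number_def catalan_def mult_2)

lemma dyck_paths_iff:
  "P \<in> dyck_paths k \<longleftrightarrow> length P = k \<and> height P = 0 \<and> never_negative P \<and> U2 \<notin> set P"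
  by (auto simp: dyck_paths_def bic_dyck_iff)

lemma dyck_path_nth:
  assumes "P \<in> dyck_paths k" "i < k"
  shows "P ! i = U1 \<or> P ! i = D"
proof -
  have "P ! i \<noteq> U2" using assms nth_mem by (fastforce simp: dyck_paths_iff)
  then show ?thesis by (cases "P ! i") auto
qed

section \<open>Paths with a single step of the second colour\<close>

definition ups_at :: "nat \<Rightarrow> nat \<Rightarrow> nat" where
  "ups_at n i = card {P \<in> dyck_paths (2 * n). P ! i = U1}"

lemma height_take_eq_sum_list: "height (take k P) = sum_list (take k (map stepval P))"
  by (simp add: height_def take_map)

lemma bic_dyck_cong_stepval:
  assumes "map stepval P = map stepval Q"
  shows "bic_dyck P \<longleftrightarrow> bic_dyck Q"
proof -
  have len: "length P = length Q" using assms map_eq_imp_length_eq by blast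
  have "height (take k P) = height (take k Q)" for k
    using assms by (simp add: height_take_eq_sum_list)
  from this[of "length P"] this show ?thesis
    by (simp add: bic_dyck_def len)
qed

lemma map_stepval_update_same:
  assumes "i < length P" "stepval s = stepval (P ! i)"
  shows "map stepval (P[i := s]) = map stepval P"
proof -
  have "map stepval (P[i := s]) = (map stepval P)[i := map stepval P ! i]"
    using assms by (simp add: map_update)
  then show ?thesis by simp
qed

lemma unique_U2_index:
  assumes "length (filter (\<lambda>s. s = U2) P) = 1"
    and "i < length P" "P ! i = U2" "j < length P" "P ! j = U2"
  shows "i = j"
proof -
  have "card {k. k < length P \<and> P ! k = U2} = 1"
    using assms(1) by (simp add: length_filter_conv_card)
  then obtain a where "{k. k < length P \<and> P ! k = U2} = {a}"
    by (rule card_1_singletonE)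
  then have "i = a" "j = a"
    using assms(2-5) by (metis (mono_tags, lifting) mem_Collect_eq singletonD)+
  then show ?thesis by simp
qed

definition marked_paths :: "nat \<Rightarrow> nat \<Rightarrow> bstep list set" where
  "marked_paths n i =
     {P. length P = 2 * n \<and> bic_dyck P \<and> length (filter (\<lambda>s. s = U2) P) = 1 \<and> P ! i = U2}"

lemma update_U2_marked_paths:
  assumes "Q \<in> dyck_paths (2 * n)" "Q ! i = U1" "i < 2 * n"
  shows "Q[i := U2] \<in> marked_paths n i"
proof -
  have Q: "length Q = 2 * n" "bic_dyck Q" "U2 \<notin> set Q"
    using assms(1) by (auto simp: dyck_paths_def)
  have "map stepval (Q[i := U2]) = map stepval Q"
    using Q assms by (intro map_stepval_update_same) auto
  then have "bic_dyck (Q[i := U2])"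
    using Q(2) bic_dyck_cong_stepval by blast
  moreover have "{k. k < length (Q[i := U2]) \<and> Q[i := U2] ! k = U2} = {i}"
  proof -
    have "Q ! k \<noteq> U2" if "k < length Q" for k
      using Q(3) that by (metis nth_mem)
    then show ?thesis using Q(1) assms(3) by (auto simp: nth_list_update)
  qed
  ultimately show ?thesis
    using Q assms(3) by (auto simp: marked_paths_def length_filter_conv_card)
qed

lemma update_U1_dyck_paths:
  assumes "P \<in> marked_paths n i" "i < 2 * n"
  shows "P[i := U1] \<in> dyck_paths (2 * n)"
proof -
  have P: "length P = 2 * n" "bic_dyck P" "length (filter (\<lambda>s. s = U2) P) = 1" "P ! i = U2"
    using assms(1) by (auto simp: marked_paths_def)
  have "map stepval (P[i := U1]) = map stepval P"
    using P assms(2) by (intro map_stepval_update_same) auto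
  then have "bic_dyck (P[i := U1])"
    using P(2) bic_dyck_cong_stepval by blast
  moreover have "U2 \<notin> set (P[i := U1])"
  proof
    assume "U2 \<in> set (P[i := U1])"
    then obtain k where k: "k < length P" "P[i := U1] ! k = U2"
      by (auto simp: in_set_conv_nth)
    then have "k \<noteq> i" "P ! k = U2"
      using P(1) assms(2) by (auto simp: nth_list_update split: if_split_asm)
    with k unique_U2_index[OF P(3), of i k] P(1,4) assms(2) show False by simp
  qed
  ultimately show ?thesis
    using P by (simp add: dyck_paths_def)
qed

lemma card_marked_paths:
  assumes "i < 2 * n"
  shows "card (marked_paths n i) = ups_at n i"
proof -
  have "bij_betw (\<lambda>Q. Q[i := U2]) {P \<in> dyck_paths (2 * n). P ! i = U1} (marked_paths n i)"
  proof (rule bij_betw_byWitness[where f' = "\<lambda>P. P[i := U1]"])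
    show "\<forall>Q\<in>{P \<in> dyck_paths (2 * n). P ! i = U1}. (Q[i := U2])[i := U1] = Q"
      by (metis (mono_tags, lifting) list_update_id list_update_overwrite mem_Collect_eq)
    show "\<forall>P\<in>marked_paths n i. (P[i := U1])[i := U2] = P"
      by (metis (mono_tags, lifting) list_update_id list_update_overwrite marked_paths_def mem_Collect_eq)
    show "(\<lambda>Q. Q[i := U2]) ` {P \<in> dyck_paths (2 * n). P ! i = U1} \<subseteq> marked_paths n i"
      using assms by (auto intro: update_U2_marked_paths)
    show "(\<lambda>P. P[i := U1]) ` marked_paths n i \<subseteq> {P \<in> dyck_paths (2 * n). P ! i = U1}"
      using assms by (auto intro: update_U1_dyck_paths simp: marked_paths_def)
  qed
  then show ?thesis by (simp add: ups_at_def bij_betw_same_card)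
qed

(* The U2 step at index i is the p-th step for p = i + 1, so m <= p means i >= m - 1. *)
lemma hcoef_eq_sum_ups_at:
  assumes "1 \<le> m"
  shows "hcoef n m = (\<Sum>i\<in>{m - 1..<2 * n}. ups_at n i)"
proof -
  have "{P. length P = 2 * n \<and> bic_dyck P \<and> length (filter (\<lambda>s. s = U2) P) = 1 \<and>
          (\<exists>p. 1 \<le> p \<and> p \<le> length P \<and> P ! (p - 1) = U2 \<and> 1 \<le> m \<and> m \<le> p)}
        = (\<Union>i\<in>{m - 1..<2 * n}. marked_paths n i)"
  proof (intro equalityI subsetI)
    fix P
    assume "P \<in> {P. length P = 2 * n \<and> bic_dyck P \<and> length (filter (\<lambda>s. s = U2) P) = 1 \<and>
              (\<exists>p. 1 \<le> p \<and> p \<le> length P \<and> P ! (p - 1) = U2 \<and> 1 \<le> m \<and> m \<le> p)}"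
    then obtain p where "length P = 2 * n" "bic_dyck P" "length (filter (\<lambda>s. s = U2) P) = 1"
      "1 \<le> p" "p \<le> length P" "P ! (p - 1) = U2" "m \<le> p" by blast
    then have "P \<in> marked_paths n (p - 1)" "p - 1 \<in> {m - 1..<2 * n}"
      by (auto simp: marked_paths_def)
    then show "P \<in> (\<Union>i\<in>{m - 1..<2 * n}. marked_paths n i)" by blast
  next
    fix P assume "P \<in> (\<Union>i\<in>{m - 1..<2 * n}. marked_paths n i)"
    then obtain i where "i \<in> {m - 1..<2 * n}" "P \<in> marked_paths n i" by blast
    then show "P \<in> {P. length P = 2 * n \<and> bic_dyck P \<and> length (filter (\<lambda>s. s = U2) P) = 1 \<and>
              (\<exists>p. 1 \<le> p \<and> p \<le> length P \<and> P ! (p - 1) = U2 \<and> 1 \<le> m \<and> m \<le> p)}"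
      using assms by (auto simp: marked_paths_def intro!: exI[of _ "Suc i"])
  qed
  then have "hcoef n m = card (\<Union>i\<in>{m - 1..<2 * n}. marked_paths n i)"
    by (simp add: hcoef_def)
  also have "\<dots> = (\<Sum>i\<in>{m - 1..<2 * n}. card (marked_paths n i))"
  proof (rule card_UN_disjoint)
    show "\<forall>i\<in>{m - 1..<2 * n}. finite (marked_paths n i)"
      by (auto intro: finite_subset[OF _ finite_paths_length_eq[of "2 * n"]] simp: marked_paths_def)
    show "\<forall>i\<in>{m - 1..<2 * n}. \<forall>j\<in>{m - 1..<2 * n}. i \<noteq> j \<longrightarrow> marked_paths n i \<inter> marked_paths n j = {}"
      using unique_U2_index by (fastforce simp: marked_paths_def)
  qed simp
  also have "\<dots> = (\<Sum>i\<in>{m - 1..<2 * n}. ups_at n i)"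
    by (rule sum.cong) (auto simp: card_marked_paths)
  finally show ?thesis .
qed

lemma hcoef_0: "hcoef n 0 = 0"
  by (simp add: hcoef_def)

lemma hcoef_eq_0: "2 * n < m \<Longrightarrow> hcoef n m = 0"
  unfolding hcoef_def by (auto intro!: card_eq_0_iff[THEN iffD2] simp: Collect_empty_eq)

definition flip :: "bstep \<Rightarrow> bstep" where
  "flip s = (case s of D \<Rightarrow> U1 | _ \<Rightarrow> D)"

definition mirror :: "bstep list \<Rightarrow> bstep list" where
  "mirror P = map flip (rev P)"

lemma stepval_flip [simp]: "stepval (flip s) = - stepval s"
  by (cases s) (auto simp: flip_def)

lemma height_map_flip [simp]: "height (map flip P) = - height P"
  by (induction P) auto

lemma height_rev [simp]: "height (rev P) = height P"
  by (induction P) auto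

lemma height_take_mirror: "height (take j (mirror P)) = - height (drop (length P - j) P)"
  by (simp add: mirror_def take_map take_rev)

lemma mirror_mirror: "U2 \<notin> set P \<Longrightarrow> mirror (mirror P) = P"
  by (induction P) (auto simp: mirror_def flip_def split: bstep.splits)

lemma nth_mirror: "i < length P \<Longrightarrow> mirror P ! i = flip (P ! (length P - Suc i))"
  by (simp add: mirror_def rev_nth)

lemma mirror_dyck_paths:
  assumes "P \<in> dyck_paths k"
  shows "mirror P \<in> dyck_paths k"
proof -
  have P: "length P = k" "height P = 0" "never_negative P" "U2 \<notin> set P"
    using assms by (auto simp: dyck_paths_iff)
  have "height (take j (mirror P)) = height (take (length P - j) P)" for j
    using P(2) height_append[of "take (length P - j) P" "drop (length P - j) P"]
    by (simp add: height_take_mirror)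
  then have "never_negative (mirror P)"
    using P(3) by (simp add: never_negative_def never_negative_height_take)
  moreover have "U2 \<notin> set (mirror P)"
    by (auto simp: mirror_def flip_def split: bstep.splits)
  moreover have "height (mirror P) = 0"
    using P(2) by (simp add: mirror_def)
  ultimately show ?thesis using P(1) by (simp add: dyck_paths_iff mirror_def)
qed

lemma ups_at_mirror:
  assumes "i < 2 * n"
  shows "ups_at n i + ups_at n (2 * n - 1 - i) = card (dyck_paths (2 * n))"
proof -
  let ?S = "dyck_paths (2 * n)" and ?j = "2 * n - 1 - i"
  have j: "?j < 2 * n" using assms by simp
  have "bij_betw mirror {P \<in> ?S. P ! ?j = D} {P \<in> ?S. P ! i = U1}"
  proof (rule bij_betw_byWitness[where f' = mirror])
    show "\<forall>P\<in>{P \<in> ?S. P ! ?j = D}. mirror (mirror P) = P"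
      and "\<forall>P\<in>{P \<in> ?S. P ! i = U1}. mirror (mirror P) = P"
      by (auto simp: dyck_paths_iff mirror_mirror)
    have "mirror P ! i = flip (P ! ?j)" "mirror P ! ?j = flip (P ! i)" if "P \<in> ?S" for P
      using that assms j by (simp_all add: nth_mirror dyck_paths_iff Suc_diff_Suc)
    then show "mirror ` {P \<in> ?S. P ! ?j = D} \<subseteq> {P \<in> ?S. P ! i = U1}"
      and "mirror ` {P \<in> ?S. P ! i = U1} \<subseteq> {P \<in> ?S. P ! ?j = D}"
      by (auto simp: mirror_dyck_paths flip_def)
  qed
  then have "ups_at n i = card {P \<in> ?S. P ! ?j = D}"
    by (simp add: ups_at_def bij_betw_same_card)
  also have "{P \<in> ?S. P ! ?j = D} = ?S - {P \<in> ?S. P ! ?j = U1}"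
    using dyck_path_nth[OF _ j] by auto
  also have "card \<dots> = card ?S - ups_at n ?j"
    unfolding ups_at_def by (rule card_Diff_subset) auto
  finally show ?thesis
    using card_mono[of ?S "{P \<in> ?S. P ! ?j = U1}"] by (simp add: ups_at_def)
qed

lemma never_negative_swap:
  assumes "never_negative (P @ [s, t] @ Q)" "height P + stepval t \<ge> 0"
  shows "never_negative (P @ [t, s] @ Q)"
  unfolding never_negative_def
proof (intro allI impI)
  fix k
  consider "k \<le> length P" | "k = Suc (length P)" | l where "k = length P + 2 + l"
    using le_Suc_ex[of "length P + 2" k] by (cases "k \<le> Suc (length P)") (auto simp: le_Suc_eq)
  then show "height (take k (P @ [t, s] @ Q)) \<ge> 0"
  proof cases
    case 1
    then show ?thesis using never_negative_height_take[OF assms(1), of k] by simp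
  next
    case 2
    then show ?thesis using assms(2) by simp
  next
    case 3
    then show ?thesis using never_negative_height_take[OF assms(1), of k] by simp
  qed
qed

definition swap_adjacent :: "nat \<Rightarrow> bstep list \<Rightarrow> bstep list" where
  "swap_adjacent i P = take i P @ [P ! Suc i, P ! i] @ drop (Suc (Suc i)) P"

lemma split_at_adjacent:
  "Suc i < length P \<Longrightarrow> P = take i P @ [P ! i, P ! Suc i] @ drop (Suc (Suc i)) P"
  by (metis Cons_nth_drop_Suc Suc_lessD append_Cons append_Nil append_take_drop_id)

lemma swap_adjacent_simps:
  assumes "Suc i < length P"
  shows "length (swap_adjacent i P) = length P"
    and "swap_adjacent i P ! i = P ! Suc i" "swap_adjacent i P ! Suc i = P ! i"
    and "swap_adjacent i (swap_adjacent i P) = P"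
    and "set (swap_adjacent i P) = set P" "height (swap_adjacent i P) = height P"
proof -
  have P: "P = take i P @ [P ! i, P ! Suc i] @ drop (Suc (Suc i)) P"
    using split_at_adjacent[OF assms] .
  show "length (swap_adjacent i P) = length P"
    and "swap_adjacent i P ! i = P ! Suc i" "swap_adjacent i P ! Suc i = P ! i"
    using assms by (simp_all add: swap_adjacent_def nth_append)
  show "swap_adjacent i (swap_adjacent i P) = P"
    using assms P by (simp add: swap_adjacent_def nth_append min_def)
  show "set (swap_adjacent i P) = set P"
    by (subst (2) P) (auto simp: swap_adjacent_def)
  show "height (swap_adjacent i P) = height P"
    by (subst (2) P) (simp add: swap_adjacent_def)
qed

lemma swap_adjacent_dyck_paths:
  assumes P: "P \<in> dyck_paths k" and i: "Suc i < k"
    and nonneg: "height (take i P) + stepval (P ! Suc i) \<ge> 0"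
  shows "swap_adjacent i P \<in> dyck_paths k"
proof -
  have len: "Suc i < length P" using P i by (simp add: dyck_paths_iff)
  have "never_negative (take i P @ [P ! i, P ! Suc i] @ drop (Suc (Suc i)) P)"
    using split_at_adjacent[OF len] P by (simp add: dyck_paths_iff)
  then have "never_negative (swap_adjacent i P)"
    unfolding swap_adjacent_def using nonneg by (rule never_negative_swap)
  then show ?thesis using P swap_adjacent_simps[OF len] by (auto simp: dyck_paths_iff)
qed

lemma card_swapped_pattern_le:
  assumes "Suc i < 2 * n"
    and nonneg: "\<And>P. P \<in> A \<Longrightarrow> height (take i P) + stepval t \<ge> 0"
    and A: "A \<subseteq> {P \<in> dyck_paths (2 * n). P ! i = s \<and> P ! Suc i = t}"
  shows "card A \<le> card {P \<in> dyck_paths (2 * n). P ! i = t \<and> P ! Suc i = s}"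
proof (rule card_inj_on_le[where f = "swap_adjacent i"])
  have len: "Suc i < length P" if "P \<in> A" for P
    using that A assms(1) by (auto simp: dyck_paths_iff)
  show "inj_on (swap_adjacent i) A"
    by (rule inj_on_inverseI[where g = "swap_adjacent i"]) (simp add: swap_adjacent_simps len)
  show "swap_adjacent i ` A \<subseteq> {P \<in> dyck_paths (2 * n). P ! i = t \<and> P ! Suc i = s}"
    using A nonneg assms(1) by (auto simp: swap_adjacent_dyck_paths swap_adjacent_simps len)
qed simp

lemma ups_at_split:
  assumes "j < 2 * n"
  shows "ups_at n i = card {P \<in> dyck_paths (2 * n). P ! i = U1 \<and> P ! j = U1}
                    + card {P \<in> dyck_paths (2 * n). P ! i = U1 \<and> P ! j = D}"
proof -
  have "{P \<in> dyck_paths (2 * n). P ! i = U1} =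
          {P \<in> dyck_paths (2 * n). P ! i = U1 \<and> P ! j = U1} \<union>
          {P \<in> dyck_paths (2 * n). P ! i = U1 \<and> P ! j = D}"
    using dyck_path_nth[OF _ assms] by auto
  then show ?thesis
    unfolding ups_at_def by (subst card_Un_disjoint[symmetric]) auto
qed

lemma ups_at_Suc_le:
  assumes "Suc i < 2 * n"
  shows "ups_at n (Suc i) \<le> ups_at n i"
proof -
  let ?S = "dyck_paths (2 * n)"
  have "card {P \<in> ?S. P ! i = D \<and> P ! Suc i = U1} \<le> card {P \<in> ?S. P ! i = U1 \<and> P ! Suc i = D}"
  proof (intro card_swapped_pattern_le)
    show "height (take i P) + stepval U1 \<ge> 0" if "P \<in> {P \<in> ?S. P ! i = D \<and> P ! Suc i = U1}" for P
      using that never_negative_height_take[of P i] by (auto simp: dyck_paths_iff)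
  qed (use assms in auto)
  moreover have "ups_at n (Suc i) = card {P \<in> ?S. P ! i = U1 \<and> P ! Suc i = U1}
                                   + card {P \<in> ?S. P ! i = D \<and> P ! Suc i = U1}"
    using ups_at_split[of i n "Suc i"] assms by (simp add: conj_commute)
  ultimately show ?thesis
    using ups_at_split[of "Suc i" n i] assms by simp
qed

definition returns_at :: "nat \<Rightarrow> nat \<Rightarrow> nat" where
  "returns_at n i = card {P \<in> dyck_paths (2 * n). height (take i P) = 0}"

(* Steps U1 D at positions i, i + 1 can be swapped to D U1 unless the path is at height 0
   before step i. *)
lemma ups_at_le_Suc_add_returns_at:
  assumes "Suc i < 2 * n"
  shows "ups_at n i \<le> ups_at n (Suc i) + returns_at n i"
proof -
  let ?S = "dyck_paths (2 * n)"
  let ?UD = "{P \<in> ?S. P ! i = U1 \<and> P ! Suc i = D}" and ?Z = "{P \<in> ?S. height (take i P) = 0}"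
  have "card (?UD - ?Z) \<le> card {P \<in> ?S. P ! i = D \<and> P ! Suc i = U1}"
  proof (intro card_swapped_pattern_le)
    show "height (take i P) + stepval D \<ge> 0" if "P \<in> ?UD - ?Z" for P
      using that never_negative_height_take[of P i] by (auto simp: dyck_paths_iff)
  qed (use assms in auto)
  moreover have "card ?UD \<le> card ((?UD - ?Z) \<union> ?Z)"
    by (intro card_mono) auto
  moreover have "card ((?UD - ?Z) \<union> ?Z) \<le> card (?UD - ?Z) + card ?Z"
    by (rule card_Un_le)
  moreover have "ups_at n (Suc i) = card {P \<in> ?S. P ! i = U1 \<and> P ! Suc i = U1}
                                   + card {P \<in> ?S. P ! i = D \<and> P ! Suc i = U1}"
    using ups_at_split[of i n "Suc i"] assms by (simp add: conj_commute)
  ultimately show ?thesis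
    using ups_at_split[of "Suc i" n i] assms by (simp add: returns_at_def)
qed

lemma take_dyck_path:
  assumes "P \<in> dyck_paths k" "i \<le> k" "height (take i P) = 0"
  shows "take i P \<in> dyck_paths i"
proof -
  have "never_negative (take i P)"
    using assms(1) by (simp add: never_negative_def never_negative_height_take dyck_paths_iff)
  moreover have "U2 \<notin> set (take i P)"
    using assms(1) in_set_takeD by (fastforce simp: dyck_paths_iff)
  ultimately show ?thesis using assms by (simp add: dyck_paths_iff)
qed

lemma drop_dyck_path:
  assumes "P \<in> dyck_paths k" "height (take i P) = 0"
  shows "drop i P \<in> dyck_paths (k - i)"
proof -
  have P: "length P = k" "height P = 0" "never_negative P" "U2 \<notin> set P"
    using assms(1) by (auto simp: dyck_paths_iff)
  have split: "height (take (i + j) P) = height (take j (drop i P))" for j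
    using assms(2) by (simp add: take_add)
  have "never_negative (drop i P)"
    unfolding never_negative_def using split never_negative_height_take[OF P(3)] by metis
  moreover have "U2 \<notin> set (drop i P)"
    using P(4) in_set_dropD by fastforce
  moreover have "height (drop i P) = 0"
    using split[of "length P"] P(2) by simp
  ultimately show ?thesis using P(1) by (simp add: dyck_paths_iff)
qed

lemma returns_at_le:
  assumes "i \<le> 2 * n"
  shows "returns_at n i \<le> card (dyck_paths i) * card (dyck_paths (2 * n - i))"
proof -
  have "card {P \<in> dyck_paths (2 * n). height (take i P) = 0} \<le> card (dyck_paths i \<times> dyck_paths (2 * n - i))"
  proof (rule card_inj_on_le[where f = "\<lambda>P. (take i P, drop i P)"])
    show "inj_on (\<lambda>P. (take i P, drop i P)) {P \<in> dyck_paths (2 * n). height (take i P) = 0}"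
      by (rule inj_onI) (metis append_take_drop_id prod.inject)
    show "(\<lambda>P. (take i P, drop i P)) ` {P \<in> dyck_paths (2 * n). height (take i P) = 0}
            \<subseteq> dyck_paths i \<times> dyck_paths (2 * n - i)"
      using assms by (auto intro: take_dyck_path drop_dyck_path)
  qed simp
  then show ?thesis by (simp add: returns_at_def card_cartesian_product)
qed

section \<open>Estimates for Catalan numbers\<close>

lemma central_binomial_Suc:
  "((2 * Suc n) choose Suc n) * (n + 1) = 2 * (2 * n + 1) * ((2 * n) choose n)"
proof -
  have e1: "Suc (Suc (2 * n)) * (Suc (2 * n) choose n) = (Suc (Suc (2 * n)) choose Suc n) * Suc n"
    by (rule Suc_times_binomial_eq)
  have e2: "Suc (2 * n) * ((2 * n) choose n) = (Suc (2 * n) choose Suc n) * Suc n"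
    by (rule Suc_times_binomial_eq)
  have e3: "Suc (2 * n) choose Suc n = Suc (2 * n) choose n"
    using binomial_symmetric[of n "Suc (2 * n)"] by simp
  have e4: "2 * Suc n = Suc (Suc (2 * n))" by simp
  have "((2 * Suc n) choose Suc n) * (n + 1) * (n + 1) = Suc (Suc (2 * n)) * ((Suc (2 * n) choose n) * Suc n)"
    unfolding e4 using e1 by (simp del: binomial_Suc_Suc add: ac_simps)
  also have "\<dots> = Suc (Suc (2 * n)) * (Suc (2 * n) * ((2 * n) choose n))"
    using e2 e3 by (simp del: binomial_Suc_Suc add: ac_simps)
  also have "\<dots> = 2 * (2 * n + 1) * ((2 * n) choose n) * (n + 1)"
    by (simp del: binomial_Suc_Suc add: algebra_simps)
  finally show ?thesis by (rule mult_right_cancel[THEN iffD1, rotated]) simp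
qed

lemma catalan_Suc: "catalan (Suc n) = 2 * (2 * real n + 1) / (real n + 2) * catalan n"
proof -
  define c0 where "c0 = real ((2 * n) choose n)"
  define c1 where "c1 = real ((2 * Suc n) choose Suc n)"
  have "real (((2 * Suc n) choose Suc n) * (n + 1)) = real (2 * (2 * n + 1) * ((2 * n) choose n))"
    by (simp only: central_binomial_Suc)
  then have "c1 * (real n + 1) = 2 * (2 * real n + 1) * c0"
    unfolding c0_def c1_def by (simp only: of_nat_mult of_nat_add of_nat_1 of_nat_numeral)
  moreover have nz: "real n + 1 \<noteq> 0" "real n + 2 \<noteq> 0" by simp_all
  ultimately have c1: "c1 = 2 * (2 * real n + 1) * c0 / (real n + 1)"
    by (simp add: eq_divide_eq)
  show ?thesis
    unfolding catalan_def c0_def[symmetric] c1_def[symmetric] c1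
    using nz by (simp add: divide_simps)
qed

lemma catalan_upper: "catalan n ^ 2 * (real n + 1) ^ 3 \<le> 16 ^ n"
proof (induction n)
  case 0
  then show ?case by (simp add: catalan_def)
next
  case (Suc n)
  define q where "q = 4 * (2 * real n + 1) ^ 2 * (real n + 2) / (real n + 1) ^ 3"
  have "catalan (Suc n) ^ 2 * (real (Suc n) + 1) ^ 3 = (catalan n ^ 2 * (real n + 1) ^ 3) * q"
  proof -
    have "real n + 1 \<noteq> 0" "real n + 2 \<noteq> 0" by simp_all
    then show ?thesis
      by (simp add: catalan_Suc q_def power_divide divide_simps)
         (simp add: power2_eq_square power3_eq_cube algebra_simps)
  qed
  also have "\<dots> \<le> 16 ^ n * 16"
  proof (rule mult_mono)
    have "(real n + 2) * (2 * real n + 1) ^ 2 \<le> 4 * (real n + 1) ^ 3"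
      by (simp add: power2_eq_square power3_eq_cube algebra_simps)
    then show "q \<le> 16" by (simp add: q_def divide_le_eq)
  qed (use Suc.IH in \<open>simp_all add: q_def\<close>)
  finally show ?case by simp
qed

lemma catalan_lower:
  assumes "1 \<le> n"
  shows "16 ^ n \<le> catalan n ^ 2 * (4 * real n * (real n + 1) ^ 2)"
  using assms
proof (induction n rule: dec_induct)
  case base
  then show ?case by (simp add: catalan_def)
next
  case (step n)
  define q where "q = 4 * (2 * real n + 1) ^ 2 / (real n * (real n + 1))"
  have "16 ^ n * 16 \<le> (catalan n ^ 2 * (4 * real n * (real n + 1) ^ 2)) * q"
  proof (rule mult_mono)
    have "4 * real n * (real n + 1) \<le> (2 * real n + 1) ^ 2"
      by (simp add: power2_eq_square algebra_simps)
    then show "16 \<le> q" using step(1) by (simp add: q_def le_divide_eq)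
  qed (use step.IH in \<open>simp_all add: q_def\<close>)
  also have "\<dots> = catalan (Suc n) ^ 2 * (4 * real (Suc n) * (real (Suc n) + 1) ^ 2)"
  proof -
    have "real n \<noteq> 0" "real n + 1 \<noteq> 0" "real n + 2 \<noteq> 0" using step(1) by simp_all
    then show ?thesis
      by (simp add: catalan_Suc q_def power_divide divide_simps)
         (simp add: power2_eq_square algebra_simps)
  qed
  finally show ?case by simp
qed

lemma catalan_product_sq_le:
  assumes "1 \<le> n" "j \<le> n"
  shows "(catalan j * catalan (n - j)) ^ 2 * ((real j + 1) * (real (n - j) + 1)) ^ 3
           \<le> catalan n ^ 2 * (4 * real n * (real n + 1) ^ 2)"
proof -
  have "(catalan j * catalan (n - j)) ^ 2 * ((real j + 1) * (real (n - j) + 1)) ^ 3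
          = (catalan j ^ 2 * (real j + 1) ^ 3) * (catalan (n - j) ^ 2 * (real (n - j) + 1) ^ 3)"
    by (simp add: power_mult_distrib)
  also have "\<dots> \<le> 16 ^ j * 16 ^ (n - j)"
    by (intro mult_mono catalan_upper) auto
  also have "\<dots> = 16 ^ n"
    using assms(2) by (simp flip: power_add)
  also have "\<dots> \<le> catalan n ^ 2 * (4 * real n * (real n + 1) ^ 2)"
    using catalan_lower[OF assms(1)] .
  finally show ?thesis .
qed

lemma cube_product_le:
  fixes M N p q :: real
  assumes "0 \<le> M" "0 \<le> N" "0 \<le> p" "0 \<le> q" "M \<le> 2 * p" "M \<le> 2 * q" "N \<le> (p + q) ^ 3"
  shows "M ^ 3 * N \<le> 64 * (p * q) ^ 3"
proof -
  have "M ^ 3 * N \<le> (2 * min p q) ^ 3 * (2 * max p q) ^ 3"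
  proof (rule mult_mono)
    show "M ^ 3 \<le> (2 * min p q) ^ 3" using assms by (intro power_mono) auto
    have "(p + q) ^ 3 \<le> (2 * max p q) ^ 3" using assms by (intro power_mono) auto
    then show "N \<le> (2 * max p q) ^ 3" using assms(7) by linarith
  qed (use assms in auto)
  also have "\<dots> = 64 * (p * q) ^ 3"
    by (cases "p \<le> q") (simp_all add: min_def max_def power_mult_distrib)
  finally show ?thesis .
qed

lemma window_cube_le:
  assumes "j < n"
  defines "M \<equiv> real (min (2 * j + 1) (2 * n - 2 * j))"
  shows "M ^ 3 * (4 * real n * (real n + 1) ^ 2) \<le> 256 * ((real j + 1) * (real (n - j) + 1)) ^ 3"
proof -
  have "M ^ 3 * (real n * (real n + 1) ^ 2) \<le> 64 * ((real j + 1) * (real (n - j) + 1)) ^ 3"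
  proof (rule cube_product_le)
    show "M \<le> 2 * (real j + 1)" "M \<le> 2 * (real (n - j) + 1)"
      using assms(1) by (auto simp: M_def of_nat_diff)
    have "real n * (real n + 1) ^ 2 \<le> (real n + 2) ^ 3"
      by (simp add: power2_eq_square power3_eq_cube algebra_simps)
    then show "real n * (real n + 1) ^ 2 \<le> (real j + 1 + (real (n - j) + 1)) ^ 3"
      using assms(1) by (simp add: of_nat_diff add.commute)
  qed (auto simp: M_def)
  then show ?thesis by (simp add: mult_ac)
qed

lemma catalan_product_window_le:
  assumes "1 \<le> n" "j < n"
  defines "M \<equiv> real (min (2 * j + 1) (2 * n - 2 * j))"
  shows "(catalan j * catalan (n - j)) ^ 2 * M ^ 3 \<le> 256 * catalan n ^ 2"
proof -
  define X where "X = catalan j * catalan (n - j)"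
  define pq where "pq = (real j + 1) * (real (n - j) + 1)"
  define N where "N = 4 * real n * (real n + 1) ^ 2"
  have "(X ^ 2 * M ^ 3) * pq ^ 3 = M ^ 3 * (X ^ 2 * pq ^ 3)"
    by (simp add: mult_ac)
  also have "\<dots> \<le> M ^ 3 * (catalan n ^ 2 * N)"
    using catalan_product_sq_le[OF assms(1)] assms(2)
    by (intro mult_left_mono) (simp_all add: X_def pq_def N_def M_def)
  also have "\<dots> = catalan n ^ 2 * (M ^ 3 * N)"
    by (simp add: mult_ac)
  also have "\<dots> \<le> catalan n ^ 2 * (256 * pq ^ 3)"
    using window_cube_le[OF assms(2)] by (intro mult_left_mono) (simp_all add: M_def N_def pq_def)
  also have "\<dots> = (256 * catalan n ^ 2) * pq ^ 3"
    by (simp add: mult_ac)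
  finally show ?thesis
    by (simp add: X_def pq_def mult_le_cancel_right)
qed

lemma catalan_product_le:
  assumes "1 \<le> n" "j < n"
  defines "M \<equiv> real (min (2 * j + 1) (2 * n - 2 * j))"
  shows "catalan j * catalan (n - j) * (2 * M) \<le> 32 * catalan n / sqrt M"
proof -
  have M: "M > 0" using assms(2) by (simp add: M_def)
  have "(catalan j * catalan (n - j) * (2 * M)) ^ 2 * M = 4 * ((catalan j * catalan (n - j)) ^ 2 * M ^ 3)"
    by (simp add: power2_eq_square power3_eq_cube)
  also have "\<dots> \<le> 1024 * catalan n ^ 2"
    using catalan_product_window_le[OF assms(1,2)] by (simp add: M_def)
  finally have "(catalan j * catalan (n - j) * (2 * M)) ^ 2 \<le> (32 * catalan n / sqrt M) ^ 2"
    using M by (simp add: power_divide power_mult_distrib le_divide_eq)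
  moreover have "0 \<le> 32 * catalan n / sqrt M"
    using catalan_pos[of n] M by (intro divide_nonneg_nonneg) auto
  ultimately show ?thesis
    by (rule power2_le_imp_le)
qed

section \<open>The coefficients are nearly linear in m\<close>

lemma ups_at_diff_le:
  assumes "p \<le> q" "q < 2 * n"
  shows "\<bar>real (ups_at n p) - real (ups_at n q)\<bar> \<le> (\<Sum>r\<in>{p..<q}. real (returns_at n r))"
proof -
  have "0 \<le> real (ups_at n p) - real (ups_at n q) \<and>
        real (ups_at n p) - real (ups_at n q) \<le> (\<Sum>r\<in>{p..<q}. real (returns_at n r))"
    using assms
  proof (induction q rule: dec_induct)
    case base
    then show ?case by simp
  next
    case (step q)
    have "real (ups_at n (Suc q)) \<le> real (ups_at n q)"
      using ups_at_Suc_le[OF step.prems] by simp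
    moreover have "real (ups_at n q) \<le> real (ups_at n (Suc q)) + real (returns_at n q)"
      using ups_at_le_Suc_add_returns_at[OF step.prems] by linarith
    ultimately show ?case
      using step by simp
  qed
  then show ?thesis by linarith
qed

lemma ups_at_deviation:
  assumes "i < 2 * n"
  shows "\<bar>2 * real (ups_at n i) - catalan n\<bar>
           \<le> (\<Sum>r\<in>{min i (2 * n - 1 - i)..<max i (2 * n - 1 - i)}. real (returns_at n r))"
proof -
  let ?i' = "2 * n - 1 - i"
  have "real (ups_at n i) + real (ups_at n ?i') = catalan n"
    using ups_at_mirror[OF assms] card_dyck_paths[of n] by (metis of_nat_add)
  then have "2 * real (ups_at n i) - catalan n = real (ups_at n i) - real (ups_at n ?i')"
    by linarith
  then show ?thesis
    using assms ups_at_diff_le[of i ?i' n] ups_at_diff_le[of ?i' i n]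
    by (cases "i \<le> ?i'") (simp_all add: abs_minus_commute)
qed

lemma hcoef_deviation_le_sum:
  assumes "1 \<le> m" "m \<le> 2 * n + 1"
  shows "\<bar>2 * real (hcoef n m) - catalan n * (real (2 * n + 1) - real m)\<bar>
           \<le> (\<Sum>i<2 * n. \<bar>2 * real (ups_at n i) - catalan n\<bar>)"
proof -
  have "real (card {m - 1..<2 * n}) = real (2 * n + 1) - real m"
    using assms by (simp add: of_nat_diff)
  then have "2 * real (hcoef n m) - catalan n * (real (2 * n + 1) - real m)
               = (\<Sum>i\<in>{m - 1..<2 * n}. 2 * real (ups_at n i) - catalan n)"
    using hcoef_eq_sum_ups_at[OF assms(1), of n]
    by (simp add: sum_subtractf sum_distrib_left)
  also have "\<bar>\<dots>\<bar> \<le> (\<Sum>i\<in>{m - 1..<2 * n}. \<bar>2 * real (ups_at n i) - catalan n\<bar>)"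
    by (rule sum_abs)
  also have "\<dots> \<le> (\<Sum>i<2 * n. \<bar>2 * real (ups_at n i) - catalan n\<bar>)"
    by (rule sum_mono2) auto
  finally show ?thesis .
qed

lemma card_windows_containing:
  assumes "r < 2 * n"
  shows "card {i \<in> {..<2 * n}. min i (2 * n - 1 - i) \<le> r \<and> r < max i (2 * n - 1 - i)}
           \<le> 2 * min (r + 1) (2 * n - r)"
proof -
  let ?w = "min (r + 1) (2 * n - r)"
  have "{i \<in> {..<2 * n}. min i (2 * n - 1 - i) \<le> r \<and> r < max i (2 * n - 1 - i)}
          \<subseteq> {..<?w} \<union> {2 * n - ?w..<2 * n}"
    by auto
  then have "card {i \<in> {..<2 * n}. min i (2 * n - 1 - i) \<le> r \<and> r < max i (2 * n - 1 - i)}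
               \<le> card ({..<?w} \<union> {2 * n - ?w..<2 * n})"
    by (intro card_mono) auto
  also have "\<dots> \<le> card {..<?w} + card {2 * n - ?w..<2 * n}"
    by (rule card_Un_le)
  also have "\<dots> \<le> 2 * ?w"
    using assms by simp
  finally show ?thesis .
qed

lemma sum_windows_returns_at_le:
  "(\<Sum>i<2 * n. \<Sum>r\<in>{min i (2 * n - 1 - i)..<max i (2 * n - 1 - i)}. real (returns_at n r))
     \<le> (\<Sum>r<2 * n. real (returns_at n r) * real (2 * min (r + 1) (2 * n - r)))"
proof -
  have "{min i (2 * n - 1 - i)..<max i (2 * n - 1 - i)}
          = {r \<in> {..<2 * n}. min i (2 * n - 1 - i) \<le> r \<and> r < max i (2 * n - 1 - i)}"
    if "i < 2 * n" for i
    using that by auto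
  then have "(\<Sum>i<2 * n. \<Sum>r\<in>{min i (2 * n - 1 - i)..<max i (2 * n - 1 - i)}. real (returns_at n r))
      = (\<Sum>i<2 * n. \<Sum>r\<in>{r \<in> {..<2 * n}. min i (2 * n - 1 - i) \<le> r \<and> r < max i (2 * n - 1 - i)}.
           real (returns_at n r))"
    by (intro sum.cong) auto
  also have "\<dots> = (\<Sum>r<2 * n. \<Sum>i\<in>{i \<in> {..<2 * n}. min i (2 * n - 1 - i) \<le> r \<and> r < max i (2 * n - 1 - i)}.
           real (returns_at n r))"
    by (rule sum.swap_restrict) simp_all
  also have "\<dots> \<le> (\<Sum>r<2 * n. real (returns_at n r) * real (2 * min (r + 1) (2 * n - r)))"
  proof (rule sum_mono)
    fix r assume "r \<in> {..<2 * n}"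
    then have "real (card {i \<in> {..<2 * n}. min i (2 * n - 1 - i) \<le> r \<and> r < max i (2 * n - 1 - i)})
                 \<le> real (2 * min (r + 1) (2 * n - r))"
      using card_windows_containing[of r n] by (simp only: of_nat_le_iff) simp
    then show "(\<Sum>i\<in>{i \<in> {..<2 * n}. min i (2 * n - 1 - i) \<le> r \<and> r < max i (2 * n - 1 - i)}.
                 real (returns_at n r)) \<le> real (returns_at n r) * real (2 * min (r + 1) (2 * n - r))"
      by (simp add: mult.commute mult_left_mono)
  qed
  finally show ?thesis .
qed

lemma returns_at_weighted_le:
  assumes "1 \<le> n" "r < 2 * n"
  shows "real (returns_at n r) * real (2 * min (r + 1) (2 * n - r))
           \<le> 32 * catalan n / sqrt (real (min (r + 1) (2 * n - r)))"
proof (cases "even r")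
  case False
  then have "returns_at n r = 0"
    using returns_at_le[of r n] assms(2) dyck_paths_odd by simp
  then show ?thesis using catalan_pos[of n] by simp
next
  case True
  then obtain j where j: "r = 2 * j" by blast
  then have "j < n" using assms(2) by simp
  have "returns_at n r \<le> card (dyck_paths (2 * j)) * card (dyck_paths (2 * (n - j)))"
    using returns_at_le[of r n] assms(2) j by (simp add: diff_mult_distrib2)
  then have Z: "real (returns_at n r) \<le> catalan j * catalan (n - j)"
    by (metis card_dyck_paths of_nat_le_iff of_nat_mult)
  have w: "min (r + 1) (2 * n - r) = min (2 * j + 1) (2 * n - 2 * j)"
    using j by simp
  have "real (returns_at n r) * real (2 * min (r + 1) (2 * n - r))
          \<le> catalan j * catalan (n - j) * (2 * real (min (2 * j + 1) (2 * n - 2 * j)))"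
    unfolding w using Z by (simp add: mult_right_mono)
  also have "\<dots> \<le> 32 * catalan n / sqrt (real (min (2 * j + 1) (2 * n - 2 * j)))"
    by (rule catalan_product_le[OF assms(1) \<open>j < n\<close>])
  finally show ?thesis unfolding w .
qed

lemma sum_inverse_sqrt_le: "(\<Sum>r<N. 1 / sqrt (real r + 1)) \<le> 2 * sqrt (real N)"
proof (induction N)
  case 0
  then show ?case by simp
next
  case (Suc N)
  have "2 * sqrt (real N) * sqrt (real N + 1) \<le> 2 * real N + 1"
  proof (rule power2_le_imp_le)
    have "(2 * sqrt (real N) * sqrt (real N + 1)) ^ 2 = 4 * real N * (real N + 1)"
      by (simp add: power_mult_distrib)
    also have "\<dots> \<le> (2 * real N + 1) ^ 2"
      by (simp add: power2_eq_square algebra_simps)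
    finally show "(2 * sqrt (real N) * sqrt (real N + 1)) ^ 2 \<le> (2 * real N + 1) ^ 2" .
  qed simp
  then have "1 \<le> (2 * sqrt (real N + 1) - 2 * sqrt (real N)) * sqrt (real N + 1)"
    by (simp add: algebra_simps)
  then have "1 / sqrt (real N + 1) \<le> 2 * sqrt (real N + 1) - 2 * sqrt (real N)"
    by (simp add: divide_le_eq)
  then show ?case
    using Suc.IH by (simp add: add.commute)
qed

lemma sum_inverse_sqrt_min_le:
  "(\<Sum>r<2 * n. 1 / sqrt (real (min (r + 1) (2 * n - r)))) \<le> 4 * sqrt (2 * real n)"
proof -
  have "(\<Sum>r<2 * n. 1 / sqrt (real (min (r + 1) (2 * n - r))))
          \<le> (\<Sum>r<2 * n. 1 / sqrt (real (r + 1)) + 1 / sqrt (real (2 * n - r)))"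
    by (intro sum_mono) (auto simp: min_def)
  also have "\<dots> = (\<Sum>r<2 * n. 1 / sqrt (real r + 1)) + (\<Sum>r<2 * n. 1 / sqrt (real (2 * n - r)))"
    by (simp add: sum.distrib add.commute)
  also have "(\<Sum>r<2 * n. 1 / sqrt (real (2 * n - r))) = (\<Sum>r<2 * n. 1 / sqrt (real r + 1))"
  proof -
    have "(\<Sum>r<2 * n. 1 / sqrt (real (2 * n - r)))
            = (\<Sum>r<2 * n. (\<lambda>i. 1 / sqrt (real i + 1)) (2 * n - Suc r))"
      by (rule sum.cong) (auto simp: of_nat_diff)
    also have "\<dots> = (\<Sum>r<2 * n. 1 / sqrt (real r + 1))"
      by (rule sum.nat_diff_reindex)
    finally show ?thesis .
  qed
  also have "(\<Sum>r<2 * n. 1 / sqrt (real r + 1)) + (\<Sum>r<2 * n. 1 / sqrt (real r + 1))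
               \<le> 4 * sqrt (2 * real n)"
    using sum_inverse_sqrt_le[of "2 * n"] by simp
  finally show ?thesis .
qed

theorem hcoef_deviation:
  assumes "1 \<le> n" "1 \<le> m" "m \<le> 2 * n + 1"
  shows "\<bar>2 * real (hcoef n m) - catalan n * (real (2 * n + 1) - real m)\<bar>
           \<le> 128 * catalan n * sqrt (2 * real n)"
proof -
  have "\<bar>2 * real (hcoef n m) - catalan n * (real (2 * n + 1) - real m)\<bar>
          \<le> (\<Sum>i<2 * n. \<bar>2 * real (ups_at n i) - catalan n\<bar>)"
    using assms(2,3) by (rule hcoef_deviation_le_sum)
  also have "\<dots> \<le> (\<Sum>i<2 * n. \<Sum>r\<in>{min i (2 * n - 1 - i)..<max i (2 * n - 1 - i)}. real (returns_at n r))"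
    by (intro sum_mono ups_at_deviation) simp
  also have "\<dots> \<le> (\<Sum>r<2 * n. real (returns_at n r) * real (2 * min (r + 1) (2 * n - r)))"
    by (rule sum_windows_returns_at_le)
  also have "\<dots> \<le> (\<Sum>r<2 * n. 32 * catalan n * (1 / sqrt (real (min (r + 1) (2 * n - r)))))"
    using returns_at_weighted_le[OF assms(1)] by (intro sum_mono) simp
  also have "\<dots> = 32 * catalan n * (\<Sum>r<2 * n. 1 / sqrt (real (min (r + 1) (2 * n - r))))"
    by (simp add: sum_distrib_left)
  also have "\<dots> \<le> 32 * catalan n * (4 * sqrt (2 * real n))"
    using catalan_pos[of n] by (intro mult_left_mono sum_inverse_sqrt_min_le) simp
  finally show ?thesis by simp
qed

definition hcoef_partial :: "nat \<Rightarrow> nat \<Rightarrow> real" where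
  "hcoef_partial n K = (\<Sum>m\<le>K. real (hcoef n m))"

lemma hcoef_partial_deviation:
  assumes "1 \<le> n" "K \<le> 2 * n"
  shows "\<bar>2 * hcoef_partial n K - catalan n * real K * (4 * real n + 1 - real K) / 2\<bar>
           \<le> real K * (128 * catalan n * sqrt (2 * real n))"
  using assms(2)
proof (induction K)
  case 0
  then show ?case by (simp add: hcoef_partial_def hcoef_0)
next
  case (Suc K)
  have "2 * hcoef_partial n (Suc K) - catalan n * real (Suc K) * (4 * real n + 1 - real (Suc K)) / 2
      = (2 * hcoef_partial n K - catalan n * real K * (4 * real n + 1 - real K) / 2) +
        (2 * real (hcoef n (Suc K)) - catalan n * (real (2 * n + 1) - real (Suc K)))"
    by (simp add: hcoef_partial_def field_simps)
  moreover have "\<bar>2 * real (hcoef n (Suc K)) - catalan n * (real (2 * n + 1) - real (Suc K))\<bar>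
                   \<le> 128 * catalan n * sqrt (2 * real n)"
    using Suc.prems by (intro hcoef_deviation assms(1)) auto
  ultimately show ?case
    using Suc by (simp add: algebra_simps)
qed

lemma hcoef_partial_normalized_deviation:
  assumes "1 \<le> n" "K \<le> 2 * n"
  shows "\<bar>hcoef_partial n K / (catalan n * real n ^ 2)
            - (real K / real n) * (4 + 1 / real n - real K / real n) / 4\<bar>
           \<le> 128 * sqrt (2 * real n) / real n"
proof -
  define C where "C = catalan n"
  define M where "M = C * real K * (4 * real n + 1 - real K) / 2"
  have C: "C > 0" using catalan_pos by (simp add: C_def)
  have n: "real n > 0" using assms(1) by simp
  have "hcoef_partial n K / (C * real n ^ 2) - (real K / real n) * (4 + 1 / real n - real K / real n) / 4
          = (2 * hcoef_partial n K - M) / (2 * C * real n ^ 2)"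
    unfolding M_def using C n by (simp add: field_simps power2_eq_square)
  then have "\<bar>hcoef_partial n K / (C * real n ^ 2) - (real K / real n) * (4 + 1 / real n - real K / real n) / 4\<bar>
               = \<bar>2 * hcoef_partial n K - M\<bar> / (2 * C * real n ^ 2)"
    using C by (simp add: abs_divide)
  also have "\<dots> \<le> real K * (128 * C * sqrt (2 * real n)) / (2 * C * real n ^ 2)"
    using hcoef_partial_deviation[OF assms] C unfolding M_def C_def by (intro divide_right_mono) auto
  also have "\<dots> = 64 * real K * sqrt (2 * real n) / real n ^ 2"
    using C by (simp add: field_simps)
  also have "\<dots> \<le> 64 * (2 * real n) * sqrt (2 * real n) / real n ^ 2"
    using assms(2) by (intro divide_right_mono mult_right_mono) auto
  also have "\<dots> = 128 * sqrt (2 * real n) / real n"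
    using n by (simp add: field_simps power2_eq_square)
  finally show ?thesis unfolding C_def .
qed

lemma hcoef_partial_limit:
  fixes K :: "nat \<Rightarrow> nat"
  assumes K: "\<And>n. 1 \<le> n \<Longrightarrow> K n \<le> 2 * n" and t: "(\<lambda>n. real (K n) / real n) \<longlonglongrightarrow> t"
  shows "(\<lambda>n. hcoef_partial n (K n) / (catalan n * real n ^ 2)) \<longlonglongrightarrow> t * (4 - t) / 4"
proof -
  define b where "b n = (real (K n) / real n) * (4 + 1 / real n - real (K n) / real n) / 4" for n
  have "(\<lambda>n. 1 / real n) \<longlonglongrightarrow> 0" by real_asymp
  then have b: "b \<longlonglongrightarrow> t * (4 + 0 - t) / 4"
    unfolding b_def by (intro tendsto_intros t) simp
  have "(\<lambda>n. 128 * sqrt (2 * real n) / real n) \<longlonglongrightarrow> 0" by real_asymp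
  then have "(\<lambda>n. hcoef_partial n (K n) / (catalan n * real n ^ 2) - b n) \<longlonglongrightarrow> 0"
  proof (rule Lim_null_comparison[rotated])
    show "\<forall>\<^sub>F n in sequentially.
            norm (hcoef_partial n (K n) / (catalan n * real n ^ 2) - b n) \<le> 128 * sqrt (2 * real n) / real n"
      using eventually_ge_at_top[of 1]
      by eventually_elim (use hcoef_partial_normalized_deviation K in \<open>auto simp: b_def\<close>)
  qed
  from tendsto_add[OF this b] show ?thesis by simp
qed

lemma sets_Ylaw [simp]: "sets (Ylaw n) = UNIV"
  and space_Ylaw [simp]: "space (Ylaw n) = UNIV"
  by (simp_all add: Ylaw_def)

lemma htot_eq_hcoef_partial: "real (htot n) = hcoef_partial n (2 * n)"
  by (simp add: htot_def hcoef_partial_def)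

lemma emeasure_Ylaw:
  "emeasure (Ylaw n) A = ennreal ((\<Sum>m\<in>{..2 * n} \<inter> A. real (hcoef n m)) / real (htot n))"
proof -
  have "emeasure (Ylaw n) A
          = (\<integral>\<^sup>+ m. ennreal (real (hcoef n m) / real (htot n)) * indicator A m \<partial>count_space UNIV)"
    unfolding Ylaw_def by (rule emeasure_density) auto
  also have "\<dots> = (\<Sum>m\<le>2 * n. ennreal (real (hcoef n m) / real (htot n)) * indicator A m)"
    by (rule nn_integral_count_space') (auto simp: hcoef_eq_0)
  also have "\<dots> = (\<Sum>m\<le>2 * n. ennreal (real (hcoef n m) / real (htot n) * indicator A m))"
    by (rule sum.cong) (auto simp: indicator_def)
  also have "\<dots> = ennreal (\<Sum>m\<le>2 * n. real (hcoef n m) / real (htot n) * indicator A m)"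
    by (rule sum_ennreal) auto
  also have "(\<Sum>m\<le>2 * n. real (hcoef n m) / real (htot n) * indicator A m)
               = (\<Sum>m\<in>{..2 * n} \<inter> A. real (hcoef n m)) / real (htot n)"
    by (subst sum.inter_restrict) (auto simp: sum_divide_distrib indicator_def intro!: sum.cong)
  finally show ?thesis .
qed

lemma measure_Ylaw:
  "measure (Ylaw n) A = (\<Sum>m\<in>{..2 * n} \<inter> A. real (hcoef n m)) / real (htot n)"
  by (simp add: measure_def emeasure_Ylaw sum_nonneg)

lemma htot_pos:
  assumes "1 \<le> n"
  shows "htot n > 0"
proof -
  have "card (dyck_paths (2 * n)) = ups_at n 0 + ups_at n (2 * n - 1 - 0)"
    using ups_at_mirror[of 0 n] assms by simp
  also have "\<dots> = (\<Sum>i\<in>{0, 2 * n - 1}. ups_at n i)"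
    using assms by simp
  also have "\<dots> \<le> (\<Sum>i\<in>{0..<2 * n}. ups_at n i)"
    using assms by (intro sum_mono2) auto
  also have "\<dots> = hcoef n 1"
    using hcoef_eq_sum_ups_at[of 1 n] by simp
  also have "\<dots> \<le> htot n"
    unfolding htot_def using assms by (intro member_le_sum) auto
  finally show ?thesis
    using card_dyck_paths[of n] catalan_pos[of n] by (metis gr0I le_zero_eq of_nat_0 order_less_irrefl)
qed

lemma prob_space_Ylaw:
  assumes "1 \<le> n"
  shows "prob_space (Ylaw n)"
proof
  show "emeasure (Ylaw n) (space (Ylaw n)) = 1"
    using htot_pos[OF assms] htot_eq_hcoef_partial[of n] by (simp add: emeasure_Ylaw hcoef_partial_def)
qed

lemma real_distribution_Yscaled_law:
  assumes "1 \<le> n"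
  shows "real_distribution (Yscaled_law n)"
proof -
  interpret prob_space "Ylaw n" by (rule prob_space_Ylaw[OF assms])
  show ?thesis
    unfolding Yscaled_law_def by (rule real_distribution_distr) (simp add: Ylaw_def)
qed

lemma cdf_Yscaled_law:
  "cdf (Yscaled_law n) x
     = (\<Sum>m\<in>{..2 * n} \<inter> {m. real m / (2 * real n) \<le> x}. real (hcoef n m)) / real (htot n)"
proof -
  have "cdf (Yscaled_law n) x = measure (Ylaw n) ((\<lambda>m. real m / (2 * real n)) -` {..x} \<inter> space (Ylaw n))"
    unfolding cdf_def2 Yscaled_law_def by (rule measure_distr) (auto simp: Ylaw_def)
  also have "(\<lambda>m. real m / (2 * real n)) -` {..x} \<inter> space (Ylaw n) = {m. real m / (2 * real n) \<le> x}"
    by (auto simp: Ylaw_def)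
  finally show ?thesis by (simp add: measure_Ylaw)
qed

definition beta12_cdf :: "real \<Rightarrow> real" where
  "beta12_cdf x = (if x < 0 then 0 else if x \<le> 1 then 2 * x - x ^ 2 else 1)"

lemma nn_integral_beta12_density:
  assumes "0 \<le> b" "b \<le> 1"
  shows "(\<integral>\<^sup>+ y. ennreal (2 * (1 - y)) * indicator {0..b} y \<partial>lborel) = ennreal (2 * b - b ^ 2)"
proof -
  have "(\<integral>\<^sup>+ y. ennreal (2 * (1 - y)) * indicator {0..b} y \<partial>lborel) = ennreal ((2 * b - b ^ 2) - (2 * 0 - 0 ^ 2))"
  proof (rule nn_integral_FTC_Icc)
    fix y :: real assume "y \<in> {0..b}"
    then show "((\<lambda>y. 2 * y - y ^ 2) has_real_derivative 2 * (1 - y)) (at y)" "0 \<le> 2 * (1 - y)"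
      using assms by (auto intro!: derivative_eq_intros simp: algebra_simps)
  qed (use assms in auto)
  then show ?thesis by simp
qed

lemma emeasure_beta12_atMost: "emeasure beta12 {..x} = ennreal (beta12_cdf x)"
proof -
  have "emeasure beta12 {..x} = (\<integral>\<^sup>+ y. ennreal (indicator {0..1} y * (2 * (1 - y))) * indicator {..x} y \<partial>lborel)"
    unfolding beta12_def by (rule emeasure_density) auto
  also have "\<dots> = (\<integral>\<^sup>+ y. ennreal (2 * (1 - y)) * indicator {0..min x 1} y \<partial>lborel)"
    by (intro nn_integral_cong) (auto simp: indicator_def)
  also have "\<dots> = ennreal (beta12_cdf x)"
  proof (cases "x < 0")
    case True
    then show ?thesis by (simp add: beta12_cdf_def)
  next
    case False
    then show ?thesis
      by (subst nn_integral_beta12_density) (auto simp: beta12_cdf_def min_def)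
  qed
  finally show ?thesis .
qed

lemma beta12_cdf_nonneg: "beta12_cdf x \<ge> 0"
proof -
  have "2 * x - x ^ 2 = x * (2 - x)" by (simp add: power2_eq_square algebra_simps)
  then show ?thesis by (auto simp: beta12_cdf_def)
qed

lemma cdf_beta12: "cdf beta12 x = beta12_cdf x"
  by (simp add: cdf_def2 measure_def emeasure_beta12_atMost beta12_cdf_nonneg)

lemma real_distribution_beta12: "real_distribution beta12"
proof -
  have "prob_space beta12"
  proof
    have "emeasure beta12 (space beta12) = emeasure beta12 {..1}"
    proof -
      have "(\<integral>\<^sup>+ y. ennreal (indicator {0..1} y * (2 * (1 - y))) * indicator UNIV y \<partial>lborel)
              = (\<integral>\<^sup>+ y. ennreal (indicator {0..1} y * (2 * (1 - y))) * indicator {..1} y \<partial>lborel)"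
        by (intro nn_integral_cong) (auto simp: indicator_def)
      then show ?thesis
        unfolding beta12_def by (simp add: emeasure_density)
    qed
    then show "emeasure beta12 (space beta12) = 1"
      by (simp add: emeasure_beta12_atMost beta12_cdf_def)
  qed
  then show ?thesis
    by (simp add: real_distribution_def real_distribution_axioms_def beta12_def)
qed

lemma beta12_moment: "integral\<^sup>L beta12 (\<lambda>y. y ^ r) = 2 / ((real r + 1) * (real r + 2))"
proof -
  define F where "F y = 2 / (real r + 1) * y ^ (r + 1) - 2 / (real r + 2) * y ^ (r + 2)" for y :: real
  have "integral\<^sup>L beta12 (\<lambda>y. y ^ r) = (\<integral>y. (indicator {0..1} y * (2 * (1 - y))) *\<^sub>R y ^ r \<partial>lborel)"
    unfolding beta12_def by (rule integral_density) (auto simp: indicator_def)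
  also have "\<dots> = (\<integral>y. (2 * (1 - y) * y ^ r) * indicator {0..1} y \<partial>lborel)"
    by (rule Bochner_Integration.integral_cong) (auto simp: indicator_def)
  also have "\<dots> = F 1 - F 0"
  proof (rule integral_FTC_Icc_real)
    fix y :: real
    have "((\<lambda>y. y ^ (r + 1)) has_real_derivative real (r + 1) * y ^ r) (at y)"
      and "((\<lambda>y. y ^ (r + 2)) has_real_derivative real (r + 2) * y ^ (r + 1)) (at y)"
      using DERIV_pow[of "r + 1" y] DERIV_pow[of "r + 2" y] by simp_all
    then have "(F has_real_derivative
            2 / (real r + 1) * (real (r + 1) * y ^ r) - 2 / (real r + 2) * (real (r + 2) * y ^ (r + 1))) (at y)"
      unfolding F_def by (intro DERIV_diff DERIV_cmult)
    moreover have "2 / (real r + 1) * (real (r + 1) * y ^ r) = 2 * y ^ r"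
      and "2 / (real r + 2) * (real (r + 2) * y ^ (r + 1)) = 2 * y ^ (r + 1)"
      by (simp_all add: add.commute)
    ultimately show "(F has_real_derivative 2 * (1 - y) * y ^ r) (at y)"
      by (simp add: algebra_simps)
    show "isCont (\<lambda>y. 2 * (1 - y) * y ^ r) y"
      by (intro continuous_intros)
  qed simp
  also have "\<dots> = 2 / ((real r + 1) * (real r + 2))"
    by (simp add: F_def field_simps)
  finally show ?thesis .
qed

section \<open>Convergence in law and of moments\<close>

lemma tendsto_nat_floor_mult_div:
  assumes "0 \<le> c"
  shows "(\<lambda>n. real (nat \<lfloor>real n * c\<rfloor>) / real n) \<longlonglongrightarrow> c"
proof (rule tendsto_sandwich[where f = "\<lambda>n. c - 1 / real n" and h = "\<lambda>n. c"])
  show "\<forall>\<^sub>F n in sequentially. c - 1 / real n \<le> real (nat \<lfloor>real n * c\<rfloor>) / real n"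
    using eventually_ge_at_top[of 1]
  proof eventually_elim
    case (elim n)
    have "real n * c - 1 \<le> real (nat \<lfloor>real n * c\<rfloor>)"
      using assms by linarith
    then have "(real n * c - 1) / real n \<le> real (nat \<lfloor>real n * c\<rfloor>) / real n"
      by (rule divide_right_mono) simp
    moreover have "c - 1 / real n = (real n * c - 1) / real n"
      using elim by (simp add: field_simps)
    ultimately show ?case by simp
  qed
  show "\<forall>\<^sub>F n in sequentially. real (nat \<lfloor>real n * c\<rfloor>) / real n \<le> c"
    using eventually_ge_at_top[of 1]
  proof eventually_elim
    case (elim n)
    have "real (nat \<lfloor>real n * c\<rfloor>) \<le> real n * c"
      using assms by (simp add: of_nat_floor)
    then show ?case
      using elim by (simp add: field_simps)
  qed
  have "(\<lambda>n. c - 1 / real n) \<longlonglongrightarrow> c - 0"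
    by real_asymp
  then show "(\<lambda>n. c - 1 / real n) \<longlonglongrightarrow> c"
    by simp
qed simp

lemma nat_floor_mult_double_le:
  assumes "0 \<le> x" "x \<le> 1"
  shows "nat \<lfloor>real n * (2 * x)\<rfloor> \<le> 2 * n"
proof -
  have "real (nat \<lfloor>real n * (2 * x)\<rfloor>) \<le> real n * (2 * x)"
    using assms(1) by (simp add: of_nat_floor)
  also have "\<dots> \<le> real n * 2"
    using assms(2) by (intro mult_left_mono) auto
  finally show ?thesis by simp
qed

lemma cdf_Yscaled_law_eq_ratio:
  assumes "1 \<le> n" "0 \<le> x" "x \<le> 1"
  shows "cdf (Yscaled_law n) x
           = hcoef_partial n (nat \<lfloor>real n * (2 * x)\<rfloor>) / hcoef_partial n (2 * n)"
proof -
  define K where "K = nat \<lfloor>real n * (2 * x)\<rfloor>"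
  have "real m / (2 * real n) \<le> x \<longleftrightarrow> m \<le> K" for m
  proof -
    have "real m / (2 * real n) \<le> x \<longleftrightarrow> real m \<le> real n * (2 * x)"
      using assms(1) by (simp add: divide_le_eq mult_ac)
    also have "\<dots> \<longleftrightarrow> m \<le> K"
      using assms(2) unfolding K_def by (simp add: le_nat_iff le_floor_iff)
    finally show ?thesis .
  qed
  moreover have "K \<le> 2 * n"
    using assms(2,3) by (simp add: K_def nat_floor_mult_double_le)
  ultimately have "{..2 * n} \<inter> {m. real m / (2 * real n) \<le> x} = {..K}"
    by auto
  then show ?thesis
    by (simp add: cdf_Yscaled_law K_def hcoef_partial_def htot_eq_hcoef_partial)
qed

lemma cdf_Yscaled_law_neg: "x < 0 \<Longrightarrow> cdf (Yscaled_law n) x = 0"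
proof -
  assume "x < 0"
  then have "\<not> real m / (2 * real n) \<le> x" for m
    using divide_nonneg_nonneg[of "real m" "2 * real n"] by linarith
  then show ?thesis by (simp add: cdf_Yscaled_law)
qed

lemma cdf_Yscaled_law_ge_one:
  assumes "1 \<le> n" "1 \<le> x"
  shows "cdf (Yscaled_law n) x = 1"
proof -
  have "real m / (2 * real n) \<le> 1" if "m \<le> 2 * n" for m
    using that assms(1) by (simp add: divide_le_eq)
  then have "{..2 * n} \<inter> {m. real m / (2 * real n) \<le> x} = {..2 * n}"
    using assms(2) by (auto intro: order.trans)
  then show ?thesis
    using htot_pos[OF assms(1)] htot_eq_hcoef_partial[of n]
    by (simp add: cdf_Yscaled_law hcoef_partial_def)
qed

lemma cdf_Yscaled_law_tendsto_unit_interval: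
  assumes "0 \<le> x" "x < 1"
  shows "(\<lambda>n. cdf (Yscaled_law n) x) \<longlonglongrightarrow> 2 * x - x ^ 2"
proof -
  define K where "K n = nat \<lfloor>real n * (2 * x)\<rfloor>" for n
  define a where "a n = catalan n * real n ^ 2" for n
  have "(\<lambda>n. real (K n) / real n) \<longlonglongrightarrow> 2 * x"
    unfolding K_def using assms(1) by (intro tendsto_nat_floor_mult_div) simp
  then have "(\<lambda>n. hcoef_partial n (K n) / a n) \<longlonglongrightarrow> 2 * x * (4 - 2 * x) / 4"
    using assms unfolding a_def by (intro hcoef_partial_limit) (simp_all add: K_def nat_floor_mult_double_le)
  moreover have "(\<lambda>n. hcoef_partial n (2 * n) / a n) \<longlonglongrightarrow> 2 * (4 - 2) / 4"
    unfolding a_def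
  proof (rule hcoef_partial_limit)
    show "(\<lambda>n. real (2 * n) / real n) \<longlonglongrightarrow> 2"
      by (rule Lim_transform_eventually[OF tendsto_const])
         (use eventually_ge_at_top[of 1] in \<open>eventually_elim, simp\<close>)
  qed simp
  ultimately have "(\<lambda>n. (hcoef_partial n (K n) / a n) / (hcoef_partial n (2 * n) / a n))
                     \<longlonglongrightarrow> (2 * x * (4 - 2 * x) / 4) / (2 * (4 - 2) / 4)"
    by (rule tendsto_divide) simp
  moreover have "\<forall>\<^sub>F n in sequentially.
                   (hcoef_partial n (K n) / a n) / (hcoef_partial n (2 * n) / a n) = cdf (Yscaled_law n) x"
    using eventually_ge_at_top[of 1]
  proof eventually_elim
    case (elim n)
    then have "a n \<noteq> 0"
      using catalan_pos[of n] by (simp add: a_def)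
    then show ?case
      using cdf_Yscaled_law_eq_ratio[OF elim assms(1)] assms(2) by (simp add: K_def)
  qed
  ultimately have "(\<lambda>n. cdf (Yscaled_law n) x) \<longlonglongrightarrow> (2 * x * (4 - 2 * x) / 4) / (2 * (4 - 2) / 4)"
    by (rule Lim_transform_eventually)
  also have "(2 * x * (4 - 2 * x) / 4) / (2 * (4 - 2) / 4) = 2 * x - x ^ 2"
    by (simp add: power2_eq_square field_simps)
  finally show ?thesis .
qed

lemma cdf_Yscaled_law_tendsto: "(\<lambda>n. cdf (Yscaled_law n) x) \<longlonglongrightarrow> beta12_cdf x"
proof -
  consider "x < 0" | "0 \<le> x" "x < 1" | "1 \<le> x" by linarith
  then show ?thesis
  proof cases
    case 1
    then show ?thesis by (simp add: cdf_Yscaled_law_neg beta12_cdf_def)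
  next
    case 2
    then show ?thesis by (simp add: cdf_Yscaled_law_tendsto_unit_interval beta12_cdf_def)
  next
    case 3
    have "\<forall>\<^sub>F n in sequentially. cdf (Yscaled_law n) x = 1"
      using eventually_ge_at_top[of 1] by eventually_elim (use 3 in \<open>simp add: cdf_Yscaled_law_ge_one\<close>)
    moreover have "beta12_cdf x = 1"
      using 3 by (auto simp: beta12_cdf_def)
    ultimately show ?thesis
      by (simp add: tendsto_eventually)
  qed
qed

definition clamped_power :: "nat \<Rightarrow> real \<Rightarrow> real" where
  "clamped_power r y = max 0 (min 1 y) ^ r"

lemma isCont_clamped_power: "isCont (clamped_power r) y"
  unfolding clamped_power_def by (intro continuous_intros)

lemma norm_clamped_power_le: "norm (clamped_power r y) \<le> 1"
proof -
  have "0 \<le> max 0 (min 1 y)" "max 0 (min 1 y) \<le> 1" by auto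
  then show ?thesis by (simp add: clamped_power_def power_le_one)
qed

(* Weak convergence only controls bounded continuous test functions; on [0, 1] the power
   y ^ r agrees with one. *)
lemma integral_power_eq_clamped_power:
  assumes "sets M = sets borel" "AE y in M. 0 \<le> y \<and> y \<le> 1"
  shows "integral\<^sup>L M (\<lambda>y. y ^ r) = integral\<^sup>L M (clamped_power r)"
proof (rule integral_cong_AE)
  show "(\<lambda>y. y ^ r) \<in> borel_measurable M"
    by (subst measurable_cong_sets[OF assms(1) refl]) measurable
  show "clamped_power r \<in> borel_measurable M"
    by (subst measurable_cong_sets[OF assms(1) refl])
       (intro borel_measurable_continuous_onI continuous_at_imp_continuous_on ballI isCont_clamped_power)
  show "AE y in M. y ^ r = clamped_power r y"
    using assms(2) by eventually_elim (simp add: clamped_power_def)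
qed

lemma AE_Yscaled_law_unit_interval:
  assumes "1 \<le> n"
  shows "AE y in Yscaled_law n. 0 \<le> y \<and> y \<le> 1"
proof -
  have "m \<le> 2 * n" if "0 < real (hcoef n m) / real (htot n)" for m
    using that hcoef_eq_0[of n m] by (cases "m \<le> 2 * n") auto
  then have "AE m in Ylaw n. m \<le> 2 * n"
    unfolding Ylaw_def by (subst AE_density) (auto simp: AE_count_space)
  then have "AE m in Ylaw n. 0 \<le> real m / (2 * real n) \<and> real m / (2 * real n) \<le> 1"
    by eventually_elim (use assms in \<open>simp add: divide_le_eq\<close>)
  then show ?thesis
    unfolding Yscaled_law_def by (subst AE_distr_iff) (auto simp: Ylaw_def)
qed

lemma AE_beta12_unit_interval: "AE y in beta12. 0 \<le> y \<and> y \<le> 1"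
  unfolding beta12_def by (subst AE_density) (auto simp: indicator_def)

lemma weak_conv_Yscaled_law: "weak_conv_m (\<lambda>n. Yscaled_law (Suc n)) beta12"
  unfolding weak_conv_m_def weak_conv_def cdf_beta12
  using LIMSEQ_Suc[OF cdf_Yscaled_law_tendsto] by blast

lemma moments_Yscaled_law_tendsto:
  "(\<lambda>n. integral\<^sup>L (Yscaled_law (Suc n)) (\<lambda>y. y ^ r)) \<longlonglongrightarrow> integral\<^sup>L beta12 (\<lambda>y. y ^ r)"
proof -
  have "(\<lambda>n. integral\<^sup>L (Yscaled_law (Suc n)) (clamped_power r)) \<longlonglongrightarrow> integral\<^sup>L beta12 (clamped_power r)"
    using real_distribution_Yscaled_law real_distribution_beta12 weak_conv_Yscaled_law
      isCont_clamped_power norm_clamped_power_le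
    by (intro weak_conv_imp_integral_bdd_continuous_conv) auto
  moreover have "integral\<^sup>L (Yscaled_law (Suc n)) (\<lambda>y. y ^ r) = integral\<^sup>L (Yscaled_law (Suc n)) (clamped_power r)"
    for n
    using AE_Yscaled_law_unit_interval[of "Suc n"]
    by (intro integral_power_eq_clamped_power) (simp_all add: Yscaled_law_def)
  moreover have "integral\<^sup>L beta12 (\<lambda>y. y ^ r) = integral\<^sup>L beta12 (clamped_power r)"
    using AE_beta12_unit_interval by (intro integral_power_eq_clamped_power) (simp_all add: beta12_def)
  ultimately show ?thesis by simp
qed

theorem theorem18:
  shows "weak_conv_m (\<lambda>n. Yscaled_law (Suc n)) beta12 \<and>
         (\<forall>r::nat. (\<lambda>n. integral\<^sup>L (Yscaled_law (Suc n)) (\<lambda>y. y ^ r))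
                     \<longlonglongrightarrow> integral\<^sup>L beta12 (\<lambda>y. y ^ r)) \<and>
         (\<forall>r::nat. integral\<^sup>L beta12 (\<lambda>y. y ^ r) = 2 / ((real r + 1) * (real r + 2)))"
  using weak_conv_Yscaled_law moments_Yscaled_law_tendsto beta12_moment by blast

end
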